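(* Let $\mathscr{D}_n^\gamma$ be the set of all $n$-vertex trees with domination number $\gamma$. If $T\in\mathscr{D}_n^\gamma$ has the maximum value of $\xi^{ee}$ over $\mathscr{D}_n^\gamma$, then $\gamma(T)=\beta(T)=\gamma$, where $\beta(T)$ is the matching number of $T$.
   Context: For a vertex $x$ of a connected graph $G$, $\varepsilon_G(x)$ is its eccentricity and $d_G(x)$ its degree; $\xi^{ee}(G)=\sum_{uv\in E(G)}\left(\frac{1}{\varepsilon_G(u)}+\frac{1}{\varepsilon_G(v)}\right)=\sum_{x}\frac{d_G(x)}{\varepsilon_G(x)}$. The domination number $\gamma(G)$ is the minimum size of a set $D$ of vertices such that every vertex is in $D$ or adjacent to a vertex of $D$; the matching number $\beta(G)$ is the maximum number of pairwise disjoint edges. *)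

theory Defs
  imports Complex_Main
begin

definition simple_graph :: "'a set \<Rightarrow> 'a set set \<Rightarrow> bool" where
  "simple_graph V E \<longleftrightarrow> finite V \<and> (\<forall>e\<in>E. e \<subseteq> V \<and> card e = 2)"

definition is_walk :: "'a set \<Rightarrow> 'a set set \<Rightarrow> 'a list \<Rightarrow> bool" where
  "is_walk V E xs \<longleftrightarrow> xs \<noteq> [] \<and> set xs \<subseteq> V \<and>
     (\<forall>i < length xs - 1. {xs ! i, xs ! Suc i} \<in> E)"

definition connected_graph :: "'a set \<Rightarrow> 'a set set \<Rightarrow> bool" where
  "connected_graph V E \<longleftrightarrow>
     (\<forall>u\<in>V. \<forall>v\<in>V. \<exists>xs. is_walk V E xs \<and> hd xs = u \<and> last xs = v)"

definition has_cycle :: "'a set \<Rightarrow> 'a set set \<Rightarrow> bool" where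
  "has_cycle V E \<longleftrightarrow>
     (\<exists>xs. is_walk V E xs \<and> distinct xs \<and> length xs \<ge> 3 \<and> {last xs, hd xs} \<in> E)"

definition is_tree :: "'a set \<Rightarrow> 'a set set \<Rightarrow> bool" where
  "is_tree V E \<longleftrightarrow> simple_graph V E \<and> V \<noteq> {} \<and> connected_graph V E \<and> \<not> has_cycle V E"

definition gdist :: "'a set \<Rightarrow> 'a set set \<Rightarrow> 'a \<Rightarrow> 'a \<Rightarrow> nat" where
  "gdist V E u v = (LEAST k. \<exists>xs. is_walk V E xs \<and> hd xs = u \<and> last xs = v \<and> length xs = Suc k)"

definition ecc :: "'a set \<Rightarrow> 'a set set \<Rightarrow> 'a \<Rightarrow> nat" where
  "ecc V E x = Max ((\<lambda>y. gdist V E x y) ` V)"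

definition degree :: "'a set set \<Rightarrow> 'a \<Rightarrow> nat" where
  "degree E x = card {e \<in> E. x \<in> e}"

definition xi_ee :: "'a set \<Rightarrow> 'a set set \<Rightarrow> real" where
  "xi_ee V E = (\<Sum>x\<in>V. real (degree E x) / real (ecc V E x))"

definition dominating_set :: "'a set \<Rightarrow> 'a set set \<Rightarrow> 'a set \<Rightarrow> bool" where
  "dominating_set V E D \<longleftrightarrow> D \<subseteq> V \<and> (\<forall>v\<in>V. v \<in> D \<or> (\<exists>u\<in>D. {u, v} \<in> E))"

definition domination_number :: "'a set \<Rightarrow> 'a set set \<Rightarrow> nat" where
  "domination_number V E = Min (card ` {D. dominating_set V E D})"

definition is_matching :: "'a set set \<Rightarrow> 'a set set \<Rightarrow> bool" where
  "is_matching E M \<longleftrightarrow> M \<subseteq> E \<and> (\<forall>e1\<in>M. \<forall>e2\<in>M. e1 \<noteq> e2 \<longrightarrow> e1 \<inter> e2 = {})"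

definition matching_number :: "'a set set \<Rightarrow> nat" where
  "matching_number E = Max (card ` {M. is_matching E M})"

end

theory Submission
  imports Defs
begin

text \<open>
  In a graph without isolated vertices \<open>\<gamma> \<le> \<beta>\<close>: one well-chosen endpoint of each edge of a
  maximum matching is a dominating set. Suppose now that an extremal tree had \<open>\<gamma> < \<beta>\<close>.
  Then \<open>\<gamma> \<ge> 2\<close>, since \<open>\<gamma> = 1\<close> makes the tree a star, so \<open>\<beta> \<ge> 3\<close>. Bounding every
  \<open>1/\<epsilon>(x)\<close> by a vertex weight turns \<open>\<xi>\<^sup>e\<^sup>e\<close> into a sum of edge weights, and this gives
  \<open>\<xi>\<^sup>e\<^sup>e \<le> 5(n - 1)/6 - (\<beta> - 1)/4\<close> for every tree with \<open>\<beta> \<ge> 3\<close>: if all eccentricities are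
  at least three, \<open>\<xi>\<^sup>e\<^sup>e \<le> 2(n - 1)/3\<close>; otherwise the tree has radius two and at least
  \<open>\<beta> - 1\<close> of its vertices lie at distance two from the center. On the other hand the spider
  with \<open>\<gamma> - 1\<close> legs of length two and all other vertices attached to the center has
  domination number \<open>\<gamma>\<close> and \<open>\<xi>\<^sup>e\<^sup>e \<ge> 5(n - 1)/6 - (\<gamma> - 1)/4\<close>, which is larger.
\<close>

section \<open>Walks, distances and eccentricities\<close>

lemma is_walk_Nil [simp]: "\<not> is_walk V E []"
  by (simp add: is_walk_def)

lemma is_walk_singleton [simp]: "is_walk V E [a] \<longleftrightarrow> a \<in> V"
  by (simp add: is_walk_def)

lemma is_walk_Cons_Cons [simp]:
  "is_walk V E (a # b # xs) \<longleftrightarrow> a \<in> V \<and> {a, b} \<in> E \<and> is_walk V E (b # xs)"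
proof
  assume h: "is_walk V E (a # b # xs)"
  have "{(b # xs) ! i, (b # xs) ! Suc i} \<in> E" if "i < length (b # xs) - 1" for i
    using h that unfolding is_walk_def by (metis Suc_less_eq diff_Suc_1 length_Cons nth_Cons_Suc)
  then show "a \<in> V \<and> {a, b} \<in> E \<and> is_walk V E (b # xs)"
    using h unfolding is_walk_def by fastforce
next
  assume h: "a \<in> V \<and> {a, b} \<in> E \<and> is_walk V E (b # xs)"
  show "is_walk V E (a # b # xs)"
    unfolding is_walk_def
  proof (intro conjI allI impI)
    show "set (a # b # xs) \<subseteq> V" using h unfolding is_walk_def by auto
    fix i assume i: "i < length (a # b # xs) - 1"
    show "{(a # b # xs) ! i, (a # b # xs) ! Suc i} \<in> E"
      using h i unfolding is_walk_def by (cases i) auto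
  qed simp
qed

lemma is_walk_nonempty: "is_walk V E xs \<Longrightarrow> xs \<noteq> []"
  by (simp add: is_walk_def)

lemma is_walk_set: "is_walk V E xs \<Longrightarrow> set xs \<subseteq> V"
  by (simp add: is_walk_def)

lemma is_walk_edge: "is_walk V E xs \<Longrightarrow> Suc i < length xs \<Longrightarrow> {xs ! i, xs ! Suc i} \<in> E"
  unfolding is_walk_def by auto

lemma is_walk_mono: "is_walk V' E' xs \<Longrightarrow> V' \<subseteq> V \<Longrightarrow> E' \<subseteq> E \<Longrightarrow> is_walk V E xs"
  unfolding is_walk_def by blast

lemma is_walk_snoc:
  "is_walk V E xs \<Longrightarrow> b \<in> V \<Longrightarrow> {last xs, b} \<in> E \<Longrightarrow> is_walk V E (xs @ [b])"
  by (induction xs rule: induct_list012) simp_all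

lemma is_walk_append:
  "is_walk V E xs \<Longrightarrow> is_walk V E ys \<Longrightarrow> last xs = hd ys \<Longrightarrow> is_walk V E (xs @ tl ys)"
  by (induction xs rule: induct_list012) (auto simp: is_walk_nonempty)

lemma is_walk_rev: "is_walk V E xs \<Longrightarrow> is_walk V E (rev xs)"
proof (induction xs rule: induct_list012)
  case (3 x y zs)
  then have "is_walk V E (rev (y # zs) @ [x])"
    by (intro is_walk_snoc) (auto simp: insert_commute)
  then show ?case by simp
qed simp_all

lemma is_walk_drop: "is_walk V E xs \<Longrightarrow> j < length xs \<Longrightarrow> is_walk V E (drop j xs)"
proof (induction xs arbitrary: j rule: induct_list012)
  case (3 x y zs) then show ?case by (cases j) auto
qed simp_all

lemma is_walk_map:
  assumes "is_walk V E xs" "\<And>a b. {a, b} \<in> E \<Longrightarrow> {f a, f b} \<in> E'"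
  shows "is_walk (f ` V) E' (map f xs)"
  using assms unfolding is_walk_def by auto

lemma join_walks_at_end:
  assumes xs: "is_walk V E xs" and ys: "is_walk V E ys" and "last xs = last ys"
  shows "\<exists>zs. is_walk V E zs \<and> hd zs = hd xs \<and> last zs = hd ys \<and> length zs + 1 = length xs + length ys"
proof (intro exI conjI)
  let ?zs = "xs @ tl (rev ys)"
  have ne: "xs \<noteq> []" "ys \<noteq> []" using xs ys by (auto dest: is_walk_nonempty)
  show "is_walk V E ?zs"
    using is_walk_append[OF xs is_walk_rev[OF ys]] assms(3) ne by (simp add: hd_rev)
  show "hd ?zs = hd xs" using ne by simp
  show "last ?zs = hd ys"
  proof (cases "tl (rev ys) = []")
    case True
    then have "last ys = hd ys"
      using ne(2) by (cases ys rule: rev_cases) auto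
    with True show ?thesis using assms(3) by simp
  next
    case False
    then show ?thesis
      using ne(2) by (simp add: last_tl last_rev)
  qed
  show "length ?zs + 1 = length xs + length ys"
    using ne(2) by simp
qed

lemma short_walk_cases:
  assumes "is_walk V E xs" "length xs \<le> 4"
  shows "(length xs = 1 \<and> hd xs = last xs) \<or> (length xs = 2 \<and> {hd xs, last xs} \<in> E)
    \<or> (length xs = 3 \<and> (\<exists>a. {hd xs, a} \<in> E \<and> {a, last xs} \<in> E))
    \<or> (length xs = 4 \<and> (\<exists>a b. {hd xs, a} \<in> E \<and> {a, b} \<in> E \<and> {b, last xs} \<in> E))"
  using assms is_walk_nonempty[OF assms(1)]
  by (cases xs rule: remdups_adj.cases; cases "tl (tl xs)" rule: remdups_adj.cases) auto

lemma gdist_le_walk: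
  assumes "is_walk V E xs" "hd xs = u" "last xs = v"
  shows "gdist V E u v \<le> length xs - 1"
proof -
  have "length xs = Suc (length xs - 1)"
    using is_walk_nonempty[OF assms(1)] by simp
  then show ?thesis
    unfolding gdist_def using assms by (intro Least_le) blast
qed

lemma shortest_walk_exists:
  assumes "connected_graph V E" "u \<in> V" "v \<in> V"
  shows "\<exists>xs. is_walk V E xs \<and> hd xs = u \<and> last xs = v \<and> length xs = Suc (gdist V E u v)"
proof -
  obtain xs where xs: "is_walk V E xs" "hd xs = u" "last xs = v"
    using assms unfolding connected_graph_def by blast
  moreover have "length xs = Suc (length xs - 1)"
    using is_walk_nonempty[OF xs(1)] by simp
  ultimately have "\<exists>k xs. is_walk V E xs \<and> hd xs = u \<and> last xs = v \<and> length xs = Suc k"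
    by blast
  then show ?thesis
    unfolding gdist_def by (rule LeastI_ex)
qed

lemma gdist_le_ecc: "finite V \<Longrightarrow> y \<in> V \<Longrightarrow> gdist V E x y \<le> ecc V E x"
  unfolding ecc_def by (rule Max_ge) auto

lemma ecc_le_bound:
  "finite V \<Longrightarrow> V \<noteq> {} \<Longrightarrow> (\<And>y. y \<in> V \<Longrightarrow> gdist V E x y \<le> b) \<Longrightarrow> ecc V E x \<le> b"
  unfolding ecc_def by (subst Max_le_iff) auto

lemma ecc_ge_no_short_walk:
  assumes "finite V" "connected_graph V E" "x \<in> V" "y \<in> V"
    and "\<And>xs. is_walk V E xs \<Longrightarrow> hd xs = x \<Longrightarrow> last xs = y \<Longrightarrow> length xs \<le> k \<Longrightarrow> False"
  shows "k \<le> ecc V E x"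
proof -
  obtain xs where "is_walk V E xs" "hd xs = x" "last xs = y" "length xs = Suc (gdist V E x y)"
    using shortest_walk_exists[OF assms(2-4)] by blast
  then have "k \<le> gdist V E x y"
    using assms(5) by (metis not_less_eq_eq)
  also have "\<dots> \<le> ecc V E x"
    using gdist_le_ecc[OF assms(1,4)] .
  finally show ?thesis .
qed

context
  fixes V :: "'a set" and E :: "'a set set" and x y :: 'a
  assumes fin: "finite V" and conn: "connected_graph V E" and xy: "x \<in> V" "y \<in> V" "x \<noteq> y"
begin

lemma ecc_ge_2:
  assumes "{x, y} \<notin> E"
  shows "2 \<le> ecc V E x"
proof (rule ecc_ge_no_short_walk[OF fin conn xy(1,2)])
  fix xs assume "is_walk V E xs" "hd xs = x" "last xs = y" "length xs \<le> 2"
  with xy(3) assms show False using short_walk_cases[of V E xs] by auto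
qed

lemma ecc_ge_3:
  assumes "{x, y} \<notin> E" "\<not> (\<exists>a. {x, a} \<in> E \<and> {a, y} \<in> E)"
  shows "3 \<le> ecc V E x"
proof (rule ecc_ge_no_short_walk[OF fin conn xy(1,2)])
  fix xs assume "is_walk V E xs" "hd xs = x" "last xs = y" "length xs \<le> 3"
  with xy(3) assms show False using short_walk_cases[of V E xs] by auto
qed

lemma ecc_ge_4:
  assumes "{x, y} \<notin> E" "\<not> (\<exists>a. {x, a} \<in> E \<and> {a, y} \<in> E)"
    and "\<not> (\<exists>a b. {x, a} \<in> E \<and> {a, b} \<in> E \<and> {b, y} \<in> E)"
  shows "4 \<le> ecc V E x"
proof (rule ecc_ge_no_short_walk[OF fin conn xy(1,2)])
  fix xs assume "is_walk V E xs" "hd xs = x" "last xs = y" "length xs \<le> 4"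
  with xy(3) assms show False using short_walk_cases[of V E xs] by auto
qed

end

section \<open>Degree sums and weighted bounds on \<open>\<xi>\<^sup>e\<^sup>e\<close>\<close>

lemma simple_graph_edgeD:
  assumes "simple_graph V E" "{a, b} \<in> E"
  shows "a \<noteq> b" "a \<in> V" "b \<in> V"
  using assms unfolding simple_graph_def by (auto simp: card_insert_if split: if_splits)

lemma simple_graph_edge_doubleton:
  "simple_graph V E \<Longrightarrow> e \<in> E \<Longrightarrow> \<exists>a b. e = {a, b} \<and> a \<noteq> b"
  unfolding simple_graph_def by (auto simp: card_2_iff)

lemma simple_graph_finite_edges: "simple_graph V E \<Longrightarrow> finite E"
  unfolding simple_graph_def by (meson Pow_iff finite_Pow_iff rev_finite_subset subsetI)

lemma sum_degree_weighted:
  assumes "simple_graph V E"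
  shows "(\<Sum>x\<in>V. real (degree E x) * w x) = (\<Sum>e\<in>E. \<Sum>x\<in>e. w x)"
proof -
  have fin: "finite V" "finite E"
    using assms simple_graph_finite_edges unfolding simple_graph_def by auto
  have "(\<Sum>x\<in>V. real (degree E x) * w x) = (\<Sum>x\<in>V. \<Sum>e\<in>{e. e \<in> E \<and> x \<in> e}. w x)"
    by (simp add: degree_def)
  also have "\<dots> = (\<Sum>e\<in>E. \<Sum>x\<in>{x. x \<in> V \<and> x \<in> e}. w x)"
    by (rule sum.swap_restrict[OF fin])
  also have "\<dots> = (\<Sum>e\<in>E. \<Sum>x\<in>e. w x)"
  proof (rule sum.cong[OF refl])
    fix e assume "e \<in> E"
    then have "{x. x \<in> V \<and> x \<in> e} = e" using assms unfolding simple_graph_def by blast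
    then show "(\<Sum>x\<in>{x. x \<in> V \<and> x \<in> e}. w x) = (\<Sum>x\<in>e. w x)" by simp
  qed
  finally show ?thesis .
qed

lemma xi_ee_le_edge_weights:
  assumes "simple_graph V E" and "\<And>x. x \<in> V \<Longrightarrow> 1 \<le> real (ecc V E x) * w x"
  shows "xi_ee V E \<le> (\<Sum>e\<in>E. \<Sum>x\<in>e. w x)"
proof -
  have "real (degree E x) / real (ecc V E x) \<le> real (degree E x) * w x" if "x \<in> V" for x
  proof -
    have ew: "1 \<le> real (ecc V E x) * w x" using assms(2)[OF that] .
    then have pos: "0 < real (ecc V E x)"
      by (cases "ecc V E x") auto
    have "real (degree E x) \<le> real (degree E x) * (real (ecc V E x) * w x)"
      using ew by (simp add: mult_le_cancel_left1)
    with pos show ?thesis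
      by (simp add: divide_le_eq ac_simps)
  qed
  then have "xi_ee V E \<le> (\<Sum>x\<in>V. real (degree E x) * w x)"
    unfolding xi_ee_def by (rule sum_mono)
  then show ?thesis
    using sum_degree_weighted[OF assms(1)] by simp
qed

lemma xi_ee_ge_edge_weights:
  assumes "simple_graph V E"
    and "\<And>x. x \<in> V \<Longrightarrow> 1 \<le> ecc V E x \<and> real (ecc V E x) * w x \<le> 1"
  shows "(\<Sum>e\<in>E. \<Sum>x\<in>e. w x) \<le> xi_ee V E"
proof -
  have "real (degree E x) * w x \<le> real (degree E x) / real (ecc V E x)" if "x \<in> V" for x
  proof -
    have ew: "1 \<le> ecc V E x" "real (ecc V E x) * w x \<le> 1" using assms(2)[OF that] by auto
    have "real (degree E x) * (real (ecc V E x) * w x) \<le> real (degree E x)"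
      using ew(2) by (simp add: mult_le_cancel_left2)
    with ew(1) show ?thesis
      by (simp add: le_divide_eq ac_simps)
  qed
  then have "(\<Sum>x\<in>V. real (degree E x) * w x) \<le> xi_ee V E"
    unfolding xi_ee_def by (rule sum_mono)
  then show ?thesis
    using sum_degree_weighted[OF assms(1)] by simp
qed

lemma xi_ee_le_card_edges:
  assumes sg: "simple_graph V E" and "\<And>x. x \<in> V \<Longrightarrow> 3 \<le> ecc V E x"
  shows "xi_ee V E \<le> 2 * real (card E) / 3"
proof -
  have "xi_ee V E \<le> (\<Sum>e\<in>E. \<Sum>x\<in>e. 1 / 3)"
    using assms(2) by (intro xi_ee_le_edge_weights[OF sg]) auto
  also have "\<dots> = (\<Sum>e\<in>E. 2 / 3)"
    using sg unfolding simple_graph_def by (intro sum.cong) auto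
  finally show ?thesis by simp
qed

section \<open>Trees and forests\<close>

lemma tree_simple_graph: "is_tree V E \<Longrightarrow> simple_graph V E"
  and tree_connected: "is_tree V E \<Longrightarrow> connected_graph V E"
  and tree_finite: "is_tree V E \<Longrightarrow> finite V"
  by (simp_all add: is_tree_def simple_graph_def)

lemma tree_no_closed_path:
  assumes "is_tree V E" "is_walk V E xs" "distinct xs" "3 \<le> length xs" "{last xs, hd xs} \<in> E"
  shows False
  using assms unfolding is_tree_def has_cycle_def by blast

lemma acyclic_path_end_neighbour:
  assumes "\<not> has_cycle V E" "simple_graph V E" "is_walk V E xs" "distinct xs"
    and "{last xs, b} \<in> E" "b \<in> set xs"
  shows "b = xs ! (length xs - 2)"
proof (rule ccontr)
  assume nb: "b \<noteq> xs ! (length xs - 2)"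
  obtain j where j: "j < length xs" "xs ! j = b"
    using assms(6) by (metis in_set_conv_nth)
  have "last xs = xs ! (length xs - 1)"
    using is_walk_nonempty[OF assms(3)] by (simp add: last_conv_nth)
  then have "j \<noteq> length xs - 1"
    using simple_graph_edgeD(1)[OF assms(2,5)] j by auto
  moreover have "j \<noteq> length xs - 2"
    using nb j by auto
  ultimately have "j + 3 \<le> length xs"
    using j(1) by linarith
  moreover have "is_walk V E (drop j xs)"
    using is_walk_drop[OF assms(3) j(1)] .
  ultimately have "has_cycle V E"
    unfolding has_cycle_def using assms(4,5) j
    by (intro exI[of _ "drop j xs"]) (simp add: hd_drop_conv_nth)
  with assms(1) show False by simp
qed

lemma longest_path_exists:
  assumes "finite V" "V \<noteq> {}"
  obtains xs where "is_walk V E xs" "distinct xs"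
    "\<And>ys. is_walk V E ys \<Longrightarrow> distinct ys \<Longrightarrow> length ys \<le> length xs"
proof -
  let ?W = "{xs. is_walk V E xs \<and> distinct xs}"
  have "length xs \<le> card V" if "xs \<in> ?W" for xs
  proof -
    have "card (set xs) \<le> card V"
      using that by (auto intro!: card_mono[OF assms(1)] is_walk_set)
    then show ?thesis using that by (simp add: distinct_card)
  qed
  then have "length ` ?W \<subseteq> {..card V}" by auto
  then have fin: "finite (length ` ?W)" by (rule finite_subset) simp
  obtain v where "v \<in> V" using assms(2) by blast
  then have "[v] \<in> ?W" by simp
  then have "length ` ?W \<noteq> {}" by blast
  then obtain xs where xs: "xs \<in> ?W" "length xs = Max (length ` ?W)"
    using Max_in[OF fin] by auto
  have "length ys \<le> length xs" if "is_walk V E ys" "distinct ys" for ys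
    unfolding xs(2) using that by (intro Max_ge[OF fin]) simp
  with xs(1) show ?thesis
    using that by blast
qed

lemma card_incident_le_one:
  assumes "simple_graph V E" "\<And>b. {a, b} \<in> E \<Longrightarrow> b = c"
  shows "card {e \<in> E. a \<in> e} \<le> 1"
proof -
  have "e = {a, c}" if e: "e \<in> E" "a \<in> e" for e
  proof -
    obtain b where "e = {a, b}"
      using simple_graph_edge_doubleton[OF assms(1) e(1)] e(2) by (auto simp: insert_commute)
    with e(1) show ?thesis using assms(2) by blast
  qed
  then have "{e \<in> E. a \<in> e} \<subseteq> {{a, c}}" by blast
  then show ?thesis
    using card_mono[of "{{a, c}}"] by fastforce
qed

text \<open>The end of a longest path is a leaf: its neighbours all lie on the path.\<close>

lemma acyclic_has_leaf:
  assumes sg: "simple_graph V E" and ne: "V \<noteq> {}" and nc: "\<not> has_cycle V E"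
  shows "\<exists>v\<in>V. card {e \<in> E. v \<in> e} \<le> 1"
proof -
  obtain xs where walk: "is_walk V E xs" and dist: "distinct xs"
    and longest: "\<And>ys. is_walk V E ys \<Longrightarrow> distinct ys \<Longrightarrow> length ys \<le> length xs"
    using longest_path_exists[OF _ ne] sg unfolding simple_graph_def by blast
  have "b = xs ! (length xs - 2)" if e: "{last xs, b} \<in> E" for b
  proof -
    have "b \<in> set xs"
    proof (rule ccontr)
      assume "b \<notin> set xs"
      then have "length (xs @ [b]) \<le> length xs"
        using is_walk_snoc[OF walk simple_graph_edgeD(3)[OF sg e] e] dist by (intro longest) auto
      then show False by simp
    qed
    then show ?thesis using acyclic_path_end_neighbour[OF nc sg walk dist e] by simp
  qed
  then have "card {e \<in> E. last xs \<in> e} \<le> 1"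
    by (rule card_incident_le_one[OF sg])
  moreover have "last xs \<in> V"
    using is_walk_set[OF walk] is_walk_nonempty[OF walk] by auto
  ultimately show ?thesis by blast
qed

lemma acyclic_card_edges:
  assumes "simple_graph V E" "\<not> has_cycle V E" "V \<noteq> {}"
  shows "card E + 1 \<le> card V"
  using assms
proof (induction "card V" arbitrary: V E rule: less_induct)
  case less
  have fV: "finite V" using less.prems(1) unfolding simple_graph_def by auto
  obtain v where v: "v \<in> V" "card {e \<in> E. v \<in> e} \<le> 1"
    using acyclic_has_leaf[OF less.prems(1,3,2)] by blast
  show ?case
  proof (cases "V = {v}")
    case True
    have "E = {}"
    proof (rule ccontr)
      assume "E \<noteq> {}"
      then obtain a b where "{a, b} \<in> E" "a \<noteq> b"
        using simple_graph_edge_doubleton[OF less.prems(1)] by blast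
      then show False using simple_graph_edgeD(2,3)[OF less.prems(1)] True by blast
    qed
    then show ?thesis using True by simp
  next
    case False
    let ?V = "V - {v}" and ?E = "{e \<in> E. v \<notin> e}"
    have sg: "simple_graph ?V ?E" using less.prems(1) unfolding simple_graph_def by auto
    have nc: "\<not> has_cycle ?V ?E"
      using less.prems(2) is_walk_mono[of ?V ?E _ V E] unfolding has_cycle_def by blast
    have "card ?E + 1 \<le> card ?V"
      using less.hyps[OF card_Diff1_less[OF fV v(1)] sg nc] False v(1) by blast
    moreover have "E = ?E \<union> {e \<in> E. v \<in> e}" by blast
    then have "card E \<le> card ?E + card {e \<in> E. v \<in> e}" by (metis card_Un_le)
    moreover have "card ?V = card V - 1" using v(1) fV by simp
    ultimately show ?thesis using v(2) card_Diff1_less[OF fV v(1)] by linarith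
  qed
qed

lemma closed_walk_two_neighbours:
  assumes walk: "is_walk V E xs" and "distinct xs" "3 \<le> length xs" and close: "{last xs, hd xs} \<in> E"
    and "v \<in> set xs"
  shows "\<exists>a\<in>set xs. \<exists>b\<in>set xs. a \<noteq> b \<and> {v, a} \<in> E \<and> {v, b} \<in> E"
proof -
  let ?L = "length xs"
  let ?next = "\<lambda>j. if Suc j = ?L then 0 else Suc j"
  have edge: "{xs ! j, xs ! ?next j} \<in> E" if "j < ?L" for j
  proof (cases "Suc j = ?L")
    case True
    moreover have "xs \<noteq> []" using assms(3) by auto
    ultimately show ?thesis
      using close by (simp add: last_conv_nth hd_conv_nth flip: True)
  next
    case False
    then show ?thesis
      using is_walk_edge[OF walk] that by simp
  qed
  obtain i where i: "i < ?L" "xs ! i = v"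
    using assms(5) by (metis in_set_conv_nth)
  define prev where "prev = (if i = 0 then ?L - 1 else i - 1)"
  have prev: "prev < ?L" "?next prev = i" "?next i \<noteq> prev" "?next i < ?L"
    using i(1) assms(3) unfolding prev_def by auto
  have "xs ! ?next i \<noteq> xs ! prev"
    using assms(2) prev by (simp add: nth_eq_iff_index_eq)
  moreover have "{v, xs ! ?next i} \<in> E" "{v, xs ! prev} \<in> E"
    using edge[OF i(1)] edge[OF prev(1)] i(2) prev(2) by (simp_all add: insert_commute)
  ultimately show ?thesis
    using prev(1,4) by (metis nth_mem)
qed

text \<open>
  The largest vertex of a cycle would have two distinct neighbours on it, both equal to its
  parent.
\<close>

lemma acyclic_if_edges_descend:
  fixes up :: "'a :: linorder \<Rightarrow> 'a"
  assumes desc: "\<And>e. e \<in> E \<Longrightarrow> \<exists>v. e = {v, up v} \<and> up v < v"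
  shows "\<not> has_cycle V E"
proof
  assume "has_cycle V E"
  then obtain xs where xs: "is_walk V E xs" "distinct xs" "3 \<le> length xs" "{last xs, hd xs} \<in> E"
    unfolding has_cycle_def by blast
  let ?m = "Max (set xs)"
  have m: "?m \<in> set xs"
    using xs(3) by (intro Max_in) auto
  have to_parent: "x = up ?m" if x: "x \<in> set xs" and e: "{?m, x} \<in> E" for x
  proof -
    obtain v where v: "{?m, x} = {v, up v}" "up v < v"
      using desc[OF e] by blast
    have "x \<le> ?m" using x by simp
    with v show ?thesis
      by (auto simp: doubleton_eq_iff)
  qed
  obtain a b where "a \<in> set xs" "b \<in> set xs" "a \<noteq> b" "{?m, a} \<in> E" "{?m, b} \<in> E"
    using closed_walk_two_neighbours[OF xs m] by blast
  then show False
    using to_parent by metis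
qed

lemma tree_has_neighbour:
  assumes "is_tree V E" "2 \<le> card V" "v \<in> V"
  shows "\<exists>a. {v, a} \<in> E"
proof -
  have "\<not> V \<subseteq> {v}"
    using assms(2) card_mono[of "{v}" V] by auto
  then obtain u where u: "u \<in> V" "u \<noteq> v" by blast
  obtain xs where xs: "is_walk V E xs" "hd xs = v" "last xs = u"
    using assms(1,3) u(1) unfolding is_tree_def connected_graph_def by blast
  with u(2) obtain z zs where "xs = v # z # zs"
    by (metis is_walk_nonempty last.simps list.collapse)
  then show ?thesis using xs(1) by auto
qed

section \<open>Matchings and dominating sets\<close>

definition maximum_matching :: "'a set set \<Rightarrow> 'a set set \<Rightarrow> bool" where
  "maximum_matching E M \<longleftrightarrow> is_matching E M \<and> card M = matching_number E"

lemma finite_matchings: "finite E \<Longrightarrow> finite {M. is_matching E M}"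
  unfolding is_matching_def by (rule finite_subset[of _ "Pow E"]) auto

lemma card_matching_le: "finite E \<Longrightarrow> is_matching E M \<Longrightarrow> card M \<le> matching_number E"
  unfolding matching_number_def by (rule Max_ge) (auto intro: finite_matchings)

lemma maximum_matching_exists: "finite E \<Longrightarrow> \<exists>M. maximum_matching E M"
proof -
  assume "finite E"
  moreover have "is_matching E {}" by (simp add: is_matching_def)
  ultimately have "matching_number E \<in> card ` {M. is_matching E M}"
    unfolding matching_number_def by (intro Max_in) (auto intro: finite_matchings)
  then show ?thesis unfolding maximum_matching_def by auto
qed

lemma is_matching_finite: "finite E \<Longrightarrow> is_matching E M \<Longrightarrow> finite M"
  unfolding is_matching_def using finite_subset by blast

lemma card_matching_le_half:
  assumes sg: "simple_graph V E" and m: "is_matching E M"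
  shows "2 * card M \<le> card V"
proof -
  have MsE: "M \<subseteq> E" using m is_matching_def by blast
  then have card2: "\<And>e. e \<in> M \<Longrightarrow> card e = 2" and "\<Union>M \<subseteq> V"
    using sg unfolding simple_graph_def by auto
  have "card (\<Union>M) = sum card M"
    using m card2 unfolding is_matching_def
    by (intro card_Union_disjoint) (auto simp: pairwise_def disjnt_def card_ge_0_finite)
  also have "\<dots> = 2 * card M"
    using card2 by simp
  finally show ?thesis
    using \<open>\<Union>M \<subseteq> V\<close> sg card_mono unfolding simple_graph_def by metis
qed

lemma matching_number_le_half: "simple_graph V E \<Longrightarrow> 2 * matching_number E \<le> card V"
  using maximum_matching_exists[OF simple_graph_finite_edges] card_matching_le_half
  unfolding maximum_matching_def by metis

lemma is_matching_insert:
  "is_matching E M \<Longrightarrow> e \<in> E \<Longrightarrow> e \<inter> \<Union>M = {} \<Longrightarrow> is_matching E (insert e M)"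
  unfolding is_matching_def by blast

lemma is_matching_Diff: "is_matching E M \<Longrightarrow> is_matching E (M - A)"
  unfolding is_matching_def by blast

lemma maximum_matching_no_free_edge:
  assumes "finite E" "maximum_matching E M" "{v, a} \<in> E" "v \<notin> \<Union>M" "a \<notin> \<Union>M"
  shows False
proof -
  have m: "is_matching E M" and fM: "finite M"
    using assms(1,2) is_matching_finite unfolding maximum_matching_def by auto
  have "is_matching E (insert {v, a} M)"
    using is_matching_insert[OF m assms(3)] assms(4,5) by blast
  moreover have "{v, a} \<notin> M"
    using assms(4) by blast
  then have "card (insert {v, a} M) = Suc (card M)"
    using fM by simp
  ultimately show False
    using card_matching_le[OF assms(1)] assms(2) unfolding maximum_matching_def by fastforce
qed

lemma maximum_matching_no_augmenting_path:
  assumes sg: "simple_graph V E" and max: "maximum_matching E M"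
    and "{v, a} \<in> E" "{a, b} \<in> M" "{b, w} \<in> E" "v \<notin> \<Union>M" "w \<notin> \<Union>M" "v \<noteq> w"
  shows False
proof -
  have fE: "finite E" using simple_graph_finite_edges[OF sg] .
  have m: "is_matching E M" and fM: "finite M"
    using max is_matching_finite[OF fE] unfolding maximum_matching_def by auto
  let ?M0 = "M - {{a, b}}"
  have "e \<inter> {a, b} = {}" if "e \<in> ?M0" for e
    using m assms(4) that unfolding is_matching_def by auto
  then have only_ab: "a \<notin> \<Union>?M0" "b \<notin> \<Union>?M0" by blast+
  have "{a, b} \<in> E"
    using m assms(4) unfolding is_matching_def by auto
  then have "a \<noteq> b"
    by (rule simple_graph_edgeD(1)[OF sg])
  have "b \<noteq> v" "a \<noteq> w"
    using assms(4,6,7) by blast+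
  have "{b, w} \<inter> \<Union>?M0 = {}"
    using only_ab(2) assms(7) by auto
  then have "is_matching E (insert {b, w} ?M0)"
    by (rule is_matching_insert[OF is_matching_Diff[OF m] assms(5)])
  moreover have "{v, a} \<inter> \<Union>(insert {b, w} ?M0) = {}"
    using only_ab(1) assms(6,8) \<open>b \<noteq> v\<close> \<open>a \<noteq> w\<close> \<open>a \<noteq> b\<close> by auto
  ultimately have m': "is_matching E (insert {v, a} (insert {b, w} ?M0))"
    by (rule is_matching_insert[OF _ assms(3)])
  have "{b, w} \<notin> ?M0" "{v, a} \<notin> insert {b, w} ?M0"
    using assms(6,7,8) \<open>b \<noteq> v\<close> by (auto simp: doubleton_eq_iff)
  moreover have "Suc (card ?M0) = card M"
    using fM assms(4) by (rule card_Suc_Diff1)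
  ultimately have "card (insert {v, a} (insert {b, w} ?M0)) = Suc (card M)"
    using fM by simp
  then show False
    using card_matching_le[OF fE m'] max unfolding maximum_matching_def by simp
qed

lemma finite_dominating_sets: "finite V \<Longrightarrow> finite {D. dominating_set V E D}"
  unfolding dominating_set_def by (rule finite_subset[of _ "Pow V"]) auto

lemma domination_number_le: "finite V \<Longrightarrow> dominating_set V E D \<Longrightarrow> domination_number V E \<le> card D"
  unfolding domination_number_def by (rule Min_le) (auto intro: finite_dominating_sets)

lemma domination_number_attained:
  "finite V \<Longrightarrow> \<exists>D. dominating_set V E D \<and> card D = domination_number V E"
proof -
  assume "finite V"
  moreover have "dominating_set V E V" by (simp add: dominating_set_def)
  ultimately have "domination_number V E \<in> card ` {D. dominating_set V E D}"
    unfolding domination_number_def by (intro Min_in) (auto intro: finite_dominating_sets)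
  then show ?thesis by auto
qed

lemma domination_number_pos:
  assumes "finite V" "V \<noteq> {}"
  shows "1 \<le> domination_number V E"
proof -
  obtain D where D: "dominating_set V E D" "card D = domination_number V E"
    using domination_number_attained[OF assms(1)] by blast
  then have "D \<noteq> {}" "finite D"
    using assms finite_subset unfolding dominating_set_def by auto
  then have "0 < card D"
    by (simp add: card_gt_0_iff)
  with D(2) show ?thesis by simp
qed

lemma maximum_matching_dominates_unmatched:
  assumes sg: "simple_graph V E" and max: "maximum_matching E M"
    and pick: "\<And>e. e \<in> M \<Longrightarrow> s e \<in> e"
    and preferred: "\<And>e a w. a \<in> e \<Longrightarrow> w \<in> V - \<Union>M \<Longrightarrow> {a, w} \<in> E \<Longrightarrow>
      \<exists>w'\<in>V - \<Union>M. {s e, w'} \<in> E"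
    and va: "{v, a} \<in> E" and v: "v \<in> V" "v \<notin> \<Union>M"
  shows "\<exists>u\<in>s ` M. {u, v} \<in> E"
proof -
  have fE: "finite E" using simple_graph_finite_edges[OF sg] .
  have "a \<in> \<Union>M"
    using maximum_matching_no_free_edge[OF fE max va v(2)] by blast
  then obtain e where e: "e \<in> M" "a \<in> e" by blast
  moreover have "M \<subseteq> E"
    using max unfolding maximum_matching_def is_matching_def by blast
  ultimately obtain b where ab: "e = {a, b}"
    using simple_graph_edge_doubleton[OF sg] by blast
  have av: "{a, v} \<in> E" using va by (simp add: insert_commute)
  then obtain w where w: "w \<in> V - \<Union>M" "{s e, w} \<in> E"
    using preferred[OF e(2)] v by blast
  have "s e = a \<or> s e = b"
    using pick[OF e(1)] ab by blast
  then show ?thesis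
  proof
    assume "s e = a"
    with av e(1) show ?thesis by blast
  next
    assume "s e = b"
    then have "w = v"
      using maximum_matching_no_augmenting_path[OF sg max va _ _ v(2), of b w] e(1) ab w by auto
    with w(2) e(1) show ?thesis by blast
  qed
qed

text \<open>
  Pick one endpoint of every edge of a maximum matching, preferring an endpoint with an
  unmatched neighbour; maximality makes this set dominating.
\<close>

lemma domination_number_le_matching_number:
  assumes sg: "simple_graph V E" and no_isolated: "\<And>v. v \<in> V \<Longrightarrow> \<exists>a. {v, a} \<in> E"
  shows "domination_number V E \<le> matching_number E"
proof -
  have fV: "finite V" and fE: "finite E"
    using sg simple_graph_finite_edges unfolding simple_graph_def by auto
  obtain M where max: "maximum_matching E M"
    using maximum_matching_exists[OF fE] by blast
  then have fM: "finite M" and MsE: "M \<subseteq> E"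
    using is_matching_finite[OF fE] unfolding maximum_matching_def is_matching_def by auto
  let ?P = "\<lambda>e a. a \<in> e \<and> (\<exists>w\<in>V - \<Union>M. {a, w} \<in> E)"
  define s where "s e = (if \<exists>a. ?P e a then SOME a. ?P e a else SOME a. a \<in> e)" for e
  have pick: "s e \<in> e" if "e \<in> M" for e
  proof -
    have "\<exists>a. a \<in> e"
      using simple_graph_edge_doubleton[OF sg] MsE that by blast
    then show ?thesis
      unfolding s_def using someI_ex[of "?P e"] someI_ex[of "\<lambda>a. a \<in> e"] by auto
  qed
  have preferred: "\<exists>w'\<in>V - \<Union>M. {s e, w'} \<in> E" if "a \<in> e" "w \<in> V - \<Union>M" "{a, w} \<in> E" for e a w
  proof -
    have "\<exists>a. ?P e a" using that by blast
    then show ?thesis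
      unfolding s_def using someI_ex[of "?P e"] by auto
  qed
  have "\<exists>u\<in>s ` M. {u, v} \<in> E" if v: "v \<in> V" "v \<notin> \<Union>M" for v
  proof -
    obtain a where "{v, a} \<in> E" using no_isolated[OF v(1)] by blast
    then show ?thesis
      using maximum_matching_dominates_unmatched[of V E M s v a] sg max pick preferred v by blast
  qed
  moreover have "\<exists>u\<in>s ` M. {u, v} \<in> E" if ve: "v \<in> e" and eM: "e \<in> M" and "v \<noteq> s e" for v e
  proof -
    obtain a b where "e = {a, b}"
      using simple_graph_edge_doubleton[OF sg] MsE eM by blast
    then have "{s e, v} = e"
      using pick[OF eM] ve \<open>v \<noteq> s e\<close> by auto
    then have "{s e, v} \<in> E" using eM MsE by auto
    then show ?thesis using eM by blast
  qed
  moreover have "s ` M \<subseteq> V"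
    using pick MsE sg unfolding simple_graph_def by blast
  ultimately have "dominating_set V E (s ` M)"
    unfolding dominating_set_def by blast
  then have "domination_number V E \<le> card (s ` M)"
    by (rule domination_number_le[OF fV])
  also have "\<dots> \<le> card M"
    by (rule card_image_le[OF fM])
  finally show ?thesis
    using max unfolding maximum_matching_def by simp
qed

lemma tree_dominating_vertex_in_edges:
  assumes tr: "is_tree V E" and x: "dominating_set V E {x}" and e: "e \<in> E"
  shows "x \<in> e"
proof (rule ccontr)
  assume nx: "x \<notin> e"
  have sg: "simple_graph V E" using tr by (rule tree_simple_graph)
  obtain a b where ab: "e = {a, b}" "a \<noteq> b"
    using simple_graph_edge_doubleton[OF sg e] by blast
  have V: "x \<in> V" "a \<in> V" "b \<in> V"
    using x simple_graph_edgeD[OF sg] e ab unfolding dominating_set_def by auto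
  then have "{x, a} \<in> E" "{x, b} \<in> E"
    using x nx ab unfolding dominating_set_def by auto
  then have "is_walk V E [x, a, b]" "{last [x, a, b], hd [x, a, b]} \<in> E"
    using V e ab by (simp_all add: insert_commute)
  then show False
    using tree_no_closed_path[OF tr] nx ab by fastforce
qed

lemma card_matching_le_one_if_common_vertex:
  assumes "finite E" "is_matching E M" "\<And>e. e \<in> E \<Longrightarrow> x \<in> e"
  shows "card M \<le> 1"
proof -
  have "\<forall>e1\<in>M. \<forall>e2\<in>M. e1 = e2"
    using assms(2,3) unfolding is_matching_def by blast
  with is_matching_finite[OF assms(1,2)] show ?thesis
    by (simp add: card_le_Suc0_iff_eq)
qed

lemma tree_matching_number_le_one:
  assumes tr: "is_tree V E" and g1: "domination_number V E = 1"
  shows "matching_number E \<le> 1"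
proof -
  have fE: "finite E" using simple_graph_finite_edges[OF tree_simple_graph[OF tr]] .
  obtain D where "dominating_set V E D" "card D = 1"
    using domination_number_attained[OF tree_finite[OF tr], of E] g1 by auto
  then obtain x where "dominating_set V E {x}"
    by (auto simp: card_1_singleton_iff)
  moreover obtain M where "maximum_matching E M"
    using maximum_matching_exists[OF fE] by blast
  ultimately show ?thesis
    using card_matching_le_one_if_common_vertex[OF fE] tree_dominating_vertex_in_edges[OF tr]
    unfolding maximum_matching_def by metis
qed

section \<open>Trees of radius two\<close>

text \<open>
  A tree of radius at most two around the vertex \<open>c\<close>: every other vertex is a neighbour
  of \<open>c\<close> (\<open>inner\<close>) or hangs from exactly one inner vertex, its \<open>parent\<close> (\<open>outer\<close>).
\<close>

locale depth_two_tree =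
  fixes V :: "'a set" and E :: "'a set set" and c :: 'a
  assumes tree: "is_tree V E" and center: "c \<in> V"
    and within_two: "\<And>y. y \<in> V \<Longrightarrow> y = c \<or> {c, y} \<in> E \<or> (\<exists>a. {c, a} \<in> E \<and> {a, y} \<in> E)"
begin

definition inner :: "'a set" where "inner = {u \<in> V. {c, u} \<in> E}"

definition outer :: "'a set" where "outer = V - insert c inner"

definition parent :: "'a \<Rightarrow> 'a" where "parent r = (SOME u. u \<in> inner \<and> {u, r} \<in> E)"

lemma sg: "simple_graph V E"
  using tree by (rule tree_simple_graph)

lemma finite_inner: "finite inner" and finite_outer: "finite outer"
  using tree_finite[OF tree] unfolding inner_def outer_def by auto

lemma innerD: "u \<in> inner \<Longrightarrow> u \<in> V \<and> u \<noteq> c \<and> {c, u} \<in> E"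
  using simple_graph_edgeD(1)[OF sg] unfolding inner_def by blast

lemma outerD: "r \<in> outer \<Longrightarrow> r \<in> V \<and> r \<noteq> c \<and> r \<notin> inner \<and> {c, r} \<notin> E"
  unfolding outer_def inner_def by blast

lemma V_eq: "V = insert c (inner \<union> outer)"
  using center unfolding outer_def inner_def by blast

lemma inner_outer_disjoint: "inner \<inter> outer = {}"
  unfolding outer_def by blast

lemma no_inner_edge: "u \<in> inner \<Longrightarrow> u' \<in> inner \<Longrightarrow> {u, u'} \<notin> E"
proof
  assume u: "u \<in> inner" "u' \<in> inner" and e: "{u, u'} \<in> E"
  have "is_walk V E [c, u, u']" "distinct [c, u, u']" "{last [c, u, u'], hd [c, u, u']} \<in> E"
    using innerD[OF u(1)] innerD[OF u(2)] simple_graph_edgeD[OF sg e] e center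
    by (auto simp: insert_commute)
  then show False
    using tree_no_closed_path[OF tree] by fastforce
qed

lemma parent_unique:
  assumes "r \<in> outer" "u \<in> inner" "u' \<in> inner" "{u, r} \<in> E" "{u', r} \<in> E"
  shows "u = u'"
proof (rule ccontr)
  assume "u \<noteq> u'"
  with assms have "is_walk V E [c, u, r, u']" "distinct [c, u, r, u']"
      "{last [c, u, r, u'], hd [c, u, r, u']} \<in> E"
    using innerD[OF assms(2)] innerD[OF assms(3)] outerD[OF assms(1)] center
    by (auto simp: insert_commute)
  then show False
    using tree_no_closed_path[OF tree] by fastforce
qed

lemma parent: "r \<in> outer \<Longrightarrow> parent r \<in> inner \<and> {parent r, r} \<in> E"
proof -
  assume r: "r \<in> outer"
  then obtain a where a: "{c, a} \<in> E" "{a, r} \<in> E"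
    using within_two outerD by blast
  then have "a \<in> inner \<and> {a, r} \<in> E"
    using simple_graph_edgeD(3)[OF sg a(1)] unfolding inner_def by blast
  then show ?thesis
    unfolding parent_def by (rule someI)
qed

lemma no_outer_edge:
  assumes r: "r \<in> outer" "r' \<in> outer" and e: "{r, r'} \<in> E"
  shows False
proof (cases "parent r = parent r'")
  case True
  have "is_walk V E [parent r, r, r']" "distinct [parent r, r, r']"
      "{last [parent r, r, r'], hd [parent r, r, r']} \<in> E"
    using parent[OF r(1)] parent[OF r(2)] outerD[OF r(1)] outerD[OF r(2)] innerD[of "parent r"]
      simple_graph_edgeD[OF sg e] e True
    by (auto simp: insert_commute)
  then show False
    using tree_no_closed_path[OF tree] by fastforce
next
  case False
  let ?xs = "[c, parent r, r, r', parent r']"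
  have "is_walk V E ?xs" "distinct ?xs" "{last ?xs, hd ?xs} \<in> E"
    using parent[OF r(1)] parent[OF r(2)] outerD[OF r(1)] outerD[OF r(2)]
      innerD[of "parent r"] innerD[of "parent r'"] simple_graph_edgeD[OF sg e] e False center
    by (auto simp: insert_commute)
  then show False
    using tree_no_closed_path[OF tree] by fastforce
qed

lemma outer_neighbour: "r \<in> outer \<Longrightarrow> {r, y} \<in> E \<Longrightarrow> y = parent r"
proof -
  assume r: "r \<in> outer" and e: "{r, y} \<in> E"
  have "y \<in> V" "y \<noteq> c"
    using simple_graph_edgeD[OF sg e] outerD[OF r] e by (auto simp: insert_commute)
  moreover have "y \<notin> outer"
    using no_outer_edge[OF r _ e] by blast
  ultimately have "y \<in> inner" using V_eq by blast
  then show ?thesis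
    using parent_unique[OF r _ _ _ ] parent[OF r] e by (metis insert_commute)
qed

lemma edges_eq: "E = (\<lambda>u. {c, u}) ` inner \<union> (\<lambda>r. {parent r, r}) ` outer"
proof
  show "E \<subseteq> (\<lambda>u. {c, u}) ` inner \<union> (\<lambda>r. {parent r, r}) ` outer"
  proof
    fix e assume eE: "e \<in> E"
    then obtain a b where ab: "e = {a, b}"
      using simple_graph_edge_doubleton[OF sg] by blast
    have ab_V: "a \<in> V" "b \<in> V" "{b, a} \<in> E"
      using simple_graph_edgeD[OF sg] eE ab by (auto simp: insert_commute)
    consider "a = c" | "b = c" | "a \<in> outer" | "b \<in> outer" | "a \<in> inner" "b \<in> inner"
      using V_eq ab_V by blast
    then show "e \<in> (\<lambda>u. {c, u}) ` inner \<union> (\<lambda>r. {parent r, r}) ` outer"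
    proof cases
      case 1 then show ?thesis using eE ab ab_V unfolding inner_def by blast
    next
      case 2 then show ?thesis using ab_V ab unfolding inner_def by (auto simp: insert_commute)
    next
      case 3 then show ?thesis using outer_neighbour eE ab by (auto simp: insert_commute)
    next
      case 4 then show ?thesis using outer_neighbour ab_V ab by blast
    next
      case 5 then show ?thesis using no_inner_edge eE ab by blast
    qed
  qed
  show "(\<lambda>u. {c, u}) ` inner \<union> (\<lambda>r. {parent r, r}) ` outer \<subseteq> E"
    using innerD parent by blast
qed

lemma card_V: "card V = Suc (card inner + card outer)"
proof -
  have "c \<notin> inner \<union> outer"
    using innerD outerD by blast
  then have "card V = Suc (card (inner \<union> outer))"
    using finite_inner finite_outer by (subst V_eq) simp
  then show ?thesis
    using finite_inner finite_outer inner_outer_disjoint by (simp add: card_Un_disjoint)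
qed

lemma matching_outer_edges:
  assumes "is_matching E M"
  shows "card {e \<in> M. c \<in> e} \<le> 1" and "{e \<in> M. c \<notin> e} \<subseteq> (\<lambda>r. {parent r, r}) ` outer"
proof -
  have "\<forall>e1\<in>{e \<in> M. c \<in> e}. \<forall>e2\<in>{e \<in> M. c \<in> e}. e1 = e2"
    using assms unfolding is_matching_def by blast
  moreover have "finite {e \<in> M. c \<in> e}"
    using is_matching_finite[OF simple_graph_finite_edges[OF sg] assms] by simp
  ultimately show "card {e \<in> M. c \<in> e} \<le> 1"
    by (simp add: card_le_Suc0_iff_eq)
  show "{e \<in> M. c \<notin> e} \<subseteq> (\<lambda>r. {parent r, r}) ` outer"
    using assms edges_eq[THEN equalityD1] unfolding is_matching_def by blast
qed

lemma matching_number_le_edges_avoiding_center: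
  assumes "maximum_matching E M"
  shows "matching_number E \<le> Suc (card {e \<in> M. c \<notin> e})"
proof -
  have m: "is_matching E M" and fM: "finite M"
    using assms is_matching_finite[OF simple_graph_finite_edges[OF sg]]
    unfolding maximum_matching_def by auto
  have "M = {e \<in> M. c \<in> e} \<union> {e \<in> M. c \<notin> e}" by blast
  then have "card M \<le> card {e \<in> M. c \<in> e} + card {e \<in> M. c \<notin> e}"
    by (metis card_Un_le)
  then show ?thesis
    using matching_outer_edges(1)[OF m] assms unfolding maximum_matching_def by linarith
qed

lemma matching_number_le: "matching_number E \<le> Suc (card outer)"
proof -
  obtain M where max: "maximum_matching E M"
    using maximum_matching_exists[OF simple_graph_finite_edges[OF sg]] by blast
  then have "card {e \<in> M. c \<notin> e} \<le> card ((\<lambda>r. {parent r, r}) ` outer)"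
    using matching_outer_edges(2) finite_outer unfolding maximum_matching_def
    by (intro card_mono) auto
  also have "\<dots> \<le> card outer"
    using finite_outer by (rule card_image_le)
  finally show ?thesis
    using matching_number_le_edges_avoiding_center[OF max] by linarith
qed

lemma outer_distinct_parents:
  assumes "3 \<le> matching_number E"
  obtains r1 r2 where "r1 \<in> outer" "r2 \<in> outer" "parent r1 \<noteq> parent r2"
proof -
  obtain M where max: "maximum_matching E M"
    using maximum_matching_exists[OF simple_graph_finite_edges[OF sg]] by blast
  then have m: "is_matching E M" and fM: "finite M"
    using is_matching_finite[OF simple_graph_finite_edges[OF sg]]
    unfolding maximum_matching_def by auto
  have "\<not> card {e \<in> M. c \<notin> e} \<le> Suc 0"
    using matching_number_le_edges_avoiding_center[OF max] assms by linarith
  then obtain e1 e2 where e: "e1 \<in> {e \<in> M. c \<notin> e}" "e2 \<in> {e \<in> M. c \<notin> e}" "e1 \<noteq> e2"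
    using fM card_le_Suc0_iff_eq[of "{e \<in> M. c \<notin> e}"] by auto
  obtain r1 where r1: "r1 \<in> outer" "e1 = {parent r1, r1}"
    using matching_outer_edges(2)[OF m] e(1) by blast
  obtain r2 where r2: "r2 \<in> outer" "e2 = {parent r2, r2}"
    using matching_outer_edges(2)[OF m] e(2) by blast
  have "e1 \<inter> e2 = {}"
    using m e unfolding is_matching_def by auto
  then have "parent r1 \<noteq> parent r2"
    using r1(2) r2(2) by auto
  with r1(1) r2(1) show ?thesis
    by (rule that)
qed

context
  fixes r1 r2
  assumes r12: "r1 \<in> outer" "r2 \<in> outer" "parent r1 \<noteq> parent r2"
begin

lemma ecc_center_ge: "2 \<le> ecc V E c"
  using outerD[OF r12(1)] by (intro ecc_ge_2[OF tree_finite[OF tree] tree_connected[OF tree] center]) auto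

lemma ecc_inner_ge:
  assumes u: "u \<in> inner"
  shows "3 \<le> ecc V E u"
proof -
  obtain r where r: "r \<in> outer" "parent r \<noteq> u"
    using r12 by metis
  have "\<not> (\<exists>a. {u, a} \<in> E \<and> {a, r} \<in> E)"
    using outer_neighbour[OF r(1)] no_inner_edge[OF u] parent[OF r(1)] by (metis insert_commute)
  moreover have "u \<noteq> r"
    using u outerD[OF r(1)] by blast
  moreover have "{u, r} \<notin> E"
    using outer_neighbour[OF r(1), of u] r(2) by (auto simp: insert_commute)
  ultimately show ?thesis
    using innerD[OF u] outerD[OF r(1)]
    by (intro ecc_ge_3[OF tree_finite[OF tree] tree_connected[OF tree]]) auto
qed

lemma ecc_outer_ge:
  assumes r: "r \<in> outer"
  shows "4 \<le> ecc V E r"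
proof -
  obtain r' where r': "r' \<in> outer" "parent r' \<noteq> parent r"
    using r12 by metis
  have "\<not> (\<exists>a b. {r, a} \<in> E \<and> {a, b} \<in> E \<and> {b, r'} \<in> E)"
    using outer_neighbour[OF r] outer_neighbour[OF r'(1)] no_inner_edge parent r r'(1)
    by (metis insert_commute)
  moreover have "\<not> (\<exists>a. {r, a} \<in> E \<and> {a, r'} \<in> E)"
    using outer_neighbour[OF r] outer_neighbour[OF r'(1)] r'(2) by (metis insert_commute)
  moreover have "r \<noteq> r'" "{r, r'} \<notin> E"
    using r'(2) no_outer_edge[OF r r'(1)] by auto
  ultimately show ?thesis
    using outerD[OF r] outerD[OF r'(1)]
    by (intro ecc_ge_4[OF tree_finite[OF tree] tree_connected[OF tree]]) auto
qed

end

lemma sum_edge_weights: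
  "(\<Sum>e\<in>E. \<Sum>x\<in>e. w x) = (\<Sum>u\<in>inner. w c + w u) + (\<Sum>r\<in>outer. w (parent r) + w r)"
proof -
  have inj1: "inj_on (\<lambda>u. {c, u}) inner"
  proof (rule inj_onI)
    fix u u' assume "u \<in> inner" "u' \<in> inner" "{c, u} = {c, u'}"
    then show "u = u'"
      using innerD[of u] by (simp add: doubleton_eq_iff)
  qed
  have inj2: "inj_on (\<lambda>r. {parent r, r}) outer"
  proof (rule inj_onI)
    fix r r' assume r: "r \<in> outer" "r' \<in> outer" and "{parent r, r} = {parent r', r'}"
    then have "r = r' \<or> r = parent r'"
      by (auto simp: doubleton_eq_iff)
    with parent[OF r(2)] outerD[OF r(1)] show "r = r'"
      by blast
  qed
  have "{c, u} \<noteq> {parent r, r}" if "u \<in> inner" "r \<in> outer" for u r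
    using outerD[OF that(2)] that(1) by (simp add: doubleton_eq_iff) blast
  then have "(\<lambda>u. {c, u}) ` inner \<inter> (\<lambda>r. {parent r, r}) ` outer = {}"
    by blast
  then have "(\<Sum>e\<in>(\<lambda>u. {c, u}) ` inner \<union> (\<lambda>r. {parent r, r}) ` outer. \<Sum>x\<in>e. w x)
      = (\<Sum>e\<in>(\<lambda>u. {c, u}) ` inner. \<Sum>x\<in>e. w x) + (\<Sum>e\<in>(\<lambda>r. {parent r, r}) ` outer. \<Sum>x\<in>e. w x)"
    using finite_inner finite_outer by (intro sum.union_disjoint) auto
  then have "(\<Sum>e\<in>E. \<Sum>x\<in>e. w x)
      = (\<Sum>e\<in>(\<lambda>u. {c, u}) ` inner. \<Sum>x\<in>e. w x) + (\<Sum>e\<in>(\<lambda>r. {parent r, r}) ` outer. \<Sum>x\<in>e. w x)"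
    by (simp only: edges_eq[symmetric])
  also have "\<dots> = (\<Sum>u\<in>inner. \<Sum>x\<in>{c, u}. w x) + (\<Sum>r\<in>outer. \<Sum>x\<in>{parent r, r}. w x)"
    by (simp add: sum.reindex[OF inj1] sum.reindex[OF inj2])
  also have "\<dots> = (\<Sum>u\<in>inner. w c + w u) + (\<Sum>r\<in>outer. w (parent r) + w r)"
  proof -
    have "c \<noteq> u" if "u \<in> inner" for u using innerD[OF that] by blast
    moreover have "parent r \<noteq> r" if "r \<in> outer" for r
      using parent[OF that] outerD[OF that] by auto
    ultimately show ?thesis
      by (intro arg_cong2[where f = "(+)"] sum.cong) auto
  qed
  finally show ?thesis .
qed

text \<open>
  Weights \<open>1/2, 1/3, 1/4\<close> on the center, inner and outer vertices: inner edges weigh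
  \<open>5/6\<close>, outer edges only \<open>7/12\<close>, and there are at least \<open>\<beta> - 1\<close> outer vertices.
\<close>

lemma xi_ee_le:
  assumes "3 \<le> matching_number E"
  shows "xi_ee V E \<le> 5 * (real (card V) - 1) / 6 - (real (matching_number E) - 1) / 4"
proof -
  obtain r1 r2 where r12: "r1 \<in> outer" "r2 \<in> outer" "parent r1 \<noteq> parent r2"
    using outer_distinct_parents[OF assms] .
  note ecc_bounds = ecc_center_ge[OF r12] ecc_inner_ge[OF r12] ecc_outer_ge[OF r12]
  define w where "w x = (if x = c then 1 / 2 else if x \<in> inner then 1 / 3 else (1 / 4 :: real))" for x
  have "xi_ee V E \<le> (\<Sum>e\<in>E. \<Sum>x\<in>e. w x)"
  proof (rule xi_ee_le_edge_weights[OF sg])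
    fix x assume "x \<in> V"
    then consider "x = c" | "x \<in> inner" | "x \<in> outer" using V_eq by blast
    then show "1 \<le> real (ecc V E x) * w x"
      using ecc_bounds innerD outerD unfolding w_def by cases force+
  qed
  also have "\<dots> = (\<Sum>u\<in>inner. 5 / 6) + (\<Sum>r\<in>outer. 7 / 12)"
    unfolding sum_edge_weights using innerD outerD parent
    by (intro arg_cong2[where f = "(+)"] sum.cong) (auto simp: w_def)
  also have "\<dots> \<le> 5 * (real (card V) - 1) / 6 - (real (matching_number E) - 1) / 4"
  proof -
    have "real (matching_number E) \<le> real (Suc (card outer))"
      using matching_number_le by (rule of_nat_mono)
    moreover have "real (card V) = 1 + real (card inner) + real (card outer)"
      using card_V by simp
    ultimately show ?thesis
      by (simp add: field_simps)
  qed
  finally show ?thesis .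
qed

end

lemma tree_xi_ee_le_matching_number:
  assumes tr: "is_tree V E" and b3: "3 \<le> matching_number E"
  shows "xi_ee V E \<le> 5 * (real (card V) - 1) / 6 - (real (matching_number E) - 1) / 4"
proof (cases "\<exists>c\<in>V. \<forall>y\<in>V. y = c \<or> {c, y} \<in> E \<or> (\<exists>a. {c, a} \<in> E \<and> {a, y} \<in> E)")
  case True
  then obtain c where "depth_two_tree V E c"
    using tr by (auto simp: depth_two_tree_def)
  then show ?thesis
    using b3 by (rule depth_two_tree.xi_ee_le)
next
  case False
  have sg: "simple_graph V E" using tr by (rule tree_simple_graph)
  have "xi_ee V E \<le> 2 * real (card E) / 3"
  proof (rule xi_ee_le_card_edges[OF sg])
    fix x assume "x \<in> V"
    then obtain y where "y \<in> V" "y \<noteq> x" "{x, y} \<notin> E" "\<not> (\<exists>a. {x, a} \<in> E \<and> {a, y} \<in> E)"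
      using False by blast
    with \<open>x \<in> V\<close> show "3 \<le> ecc V E x"
      by (intro ecc_ge_3[OF tree_finite[OF tr] tree_connected[OF tr]]) auto
  qed
  moreover have "card E + 1 \<le> card V"
    using tr unfolding is_tree_def by (intro acyclic_card_edges) auto
  moreover have "2 * matching_number E \<le> card V"
    using matching_number_le_half[OF sg] .
  ultimately show ?thesis
    by (simp add: field_simps)
qed

section \<open>The spider\<close>

text \<open>
  The extremal tree on \<open>{0..<n}\<close>: center \<open>0\<close>, its neighbours \<open>1, \<dots>, k\<close>, a pendant
  vertex \<open>v\<close> at each \<open>v - k\<close> for \<open>k < v \<le> 2k\<close>, and the remaining vertices as leaves at \<open>0\<close>;
  \<open>up v\<close> is the neighbour of \<open>v\<close> towards the center.
\<close>

locale spider =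
  fixes k n :: nat
  assumes k_pos: "1 \<le> k" and n_ge: "2 * k + 2 \<le> n"
begin

definition up :: "nat \<Rightarrow> nat" where
  "up v = (if k < v \<and> v \<le> 2 * k then v - k else 0)"

definition edges :: "nat set set" where
  "edges = (\<lambda>v. {v, up v}) ` {1..<n}"

definition root_walk :: "nat \<Rightarrow> nat list" where
  "root_walk v = (if v = 0 then [0] else if up v = 0 then [v, 0] else [v, up v, 0])"

definition height :: "nat \<Rightarrow> nat" where
  "height v = length (root_walk v) - 1"

lemma up_less: "1 \<le> v \<Longrightarrow> up v < v"
  using k_pos unfolding up_def by auto

lemma up_le: "up v \<le> k"
  unfolding up_def by auto

lemma up_up: "up (up v) = 0"
  using up_le[of v] unfolding up_def[of "up v"] by auto

lemma edge_iff: "{a, b} \<in> edges \<longleftrightarrow> (1 \<le> a \<and> a < n \<and> b = up a) \<or> (1 \<le> b \<and> b < n \<and> a = up b)"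
  unfolding edges_def by (auto simp: doubleton_eq_iff)

lemma simple: "simple_graph {0..<n} edges"
  unfolding simple_graph_def edges_def using up_less by fastforce

lemma root_walk_is_walk: "v < n \<Longrightarrow> is_walk {0..<n} edges (root_walk v) \<and> hd (root_walk v) = v \<and> last (root_walk v) = 0"
  using up_less[of v] up_up[of v] edge_iff[of v "up v"] edge_iff[of "up v" 0]
  unfolding root_walk_def by auto

lemma gdist_le_height: "u < n \<Longrightarrow> v < n \<Longrightarrow> gdist {0..<n} edges u v \<le> height u + height v"
  using join_walks_at_end[of "{0..<n}" edges "root_walk u" "root_walk v"] root_walk_is_walk[of u] root_walk_is_walk[of v]
    gdist_le_walk unfolding height_def by fastforce

lemma connected: "connected_graph {0..<n} edges"
  using join_walks_at_end root_walk_is_walk unfolding connected_graph_def by (metis atLeastLessThan_iff)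

lemma tree: "is_tree {0..<n} edges"
  unfolding is_tree_def using simple connected n_ge
  by (auto intro!: acyclic_if_edges_descend[of _ up] simp: edges_def up_less)

lemma dominating_set_up_to_k: "dominating_set {0..<n} edges {0..k}"
  unfolding dominating_set_def
proof (intro conjI ballI)
  show "{0..k} \<subseteq> {0..<n}" using n_ge by auto
  fix v assume "v \<in> {0..<n}"
  then show "v \<in> {0..k} \<or> (\<exists>u\<in>{0..k}. {u, v} \<in> edges)"
    using up_le[of v] edge_iff[of "up v" v] by (cases "v \<le> k") auto
qed

text \<open>
  A dominating set must meet each of the \<open>k + 1\<close> disjoint pairs \<open>{i, k + i}\<close> (\<open>1 \<le> i \<le> k\<close>)
  and \<open>{0, n - 1}\<close>, since \<open>k + i\<close> and \<open>n - 1\<close> are leaves.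
\<close>

lemma card_dominating_set_ge:
  assumes D: "dominating_set {0..<n} edges D"
  shows "k + 1 \<le> card D"
proof -
  have fD: "finite D" using D finite_subset unfolding dominating_set_def by blast
  have leaf: "v \<in> D \<or> up v \<in> D" if "k < v" "v < n" for v
  proof -
    have "u = up v" if "{u, v} \<in> edges" for u
      using that up_le[of u] \<open>k < v\<close> edge_iff by auto
    then show ?thesis
      using D that unfolding dominating_set_def by auto
  qed
  define pick where "pick i = (if i = 0 then (if 0 \<in> D then 0 else n - 1) else if i \<in> D then i else k + i)" for i
  have "pick i \<in> D" if "i \<le> k" for i
  proof (cases "i = 0")
    case True
    have "up (n - 1) = 0" using n_ge unfolding up_def by auto
    then show ?thesis
      using leaf[of "n - 1"] n_ge k_pos True unfolding pick_def by auto
  next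
    case False
    then have "up (k + i) = i" using that unfolding up_def by auto
    then show ?thesis
      using leaf[of "k + i"] n_ge that False unfolding pick_def by auto
  qed
  then have "pick ` {0..k} \<subseteq> D" by auto
  moreover have "inj_on pick {0..k}"
    using n_ge k_pos unfolding pick_def by (intro inj_onI) (auto split: if_splits)
  ultimately have "card {0..k} \<le> card D"
    using card_inj_on_le fD by blast
  then show ?thesis by simp
qed

lemma domination_number: "domination_number {0..<n} edges = k + 1"
proof (rule antisym)
  show "domination_number {0..<n} edges \<le> k + 1"
    using domination_number_le[OF _ dominating_set_up_to_k] by simp
  obtain D where D: "dominating_set {0..<n} edges D" "card D = domination_number {0..<n} edges"
    using domination_number_attained[of "{0..<n}" edges] by auto
  then show "k + 1 \<le> domination_number {0..<n} edges"
    using card_dominating_set_ge[OF D(1)] by simp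
qed

lemma height_eq: "height v = (if v = 0 then 0 else if k < v \<and> v \<le> 2 * k then 2 else 1)"
  unfolding height_def root_walk_def up_def by auto

lemma ecc_le_height: "x < n \<Longrightarrow> ecc {0..<n} edges x \<le> height x + 2"
proof (rule ecc_le_bound)
  fix y assume "x < n" "y \<in> {0..<n}"
  then show "gdist {0..<n} edges x y \<le> height x + 2"
    using gdist_le_height[of x y] height_eq[of y] by (simp split: if_splits)
qed (use n_ge in auto)

lemma ecc_pos: "x < n \<Longrightarrow> 1 \<le> ecc {0..<n} edges x"
proof (rule ecc_ge_no_short_walk[OF _ connected _, of x "if x = 0 then 1 else 0"])
  fix xs assume "is_walk {0..<n} edges xs" "hd xs = x" "last xs = (if x = 0 then 1 else 0)"
    "length xs \<le> 1"
  then show False by (cases xs) (auto split: if_splits)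
qed (use n_ge in auto)

lemma sum_edge_weights: "(\<Sum>e\<in>edges. \<Sum>x\<in>e. w x) = (\<Sum>v\<in>{1..<n}. w v + w (up v))"
proof -
  have "inj_on (\<lambda>v. {v, up v}) {1..<n}"
  proof (rule inj_onI)
    fix u v assume "u \<in> {1..<n}" "v \<in> {1..<n}" "{u, up u} = {v, up v}"
    then show "u = v"
      using up_less[of u] up_less[of v] by (auto simp: doubleton_eq_iff)
  qed
  then have "(\<Sum>e\<in>edges. \<Sum>x\<in>e. w x) = (\<Sum>v\<in>{1..<n}. \<Sum>x\<in>{v, up v}. w x)"
    unfolding edges_def by (simp add: sum.reindex)
  also have "\<dots> = (\<Sum>v\<in>{1..<n}. w v + w (up v))"
  proof (rule sum.cong)
    fix v assume "v \<in> {1..<n}"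
    then have "up v \<noteq> v" using up_less[of v] by simp
    then show "(\<Sum>x\<in>{v, up v}. w x) = w v + w (up v)" by simp
  qed simp
  finally show ?thesis .
qed

lemma xi_ee_ge: "5 * (real n - 1) / 6 - real k / 4 \<le> xi_ee {0..<n} edges"
proof -
  define w where
    "w v = (if v = 0 then 1 / 2 else if k < v \<and> v \<le> 2 * k then 1 / 4 else (1 / 3 :: real))" for v
  have ge: "(\<Sum>e\<in>edges. \<Sum>x\<in>e. w x) \<le> xi_ee {0..<n} edges"
  proof (rule xi_ee_ge_edge_weights[OF simple])
    fix x assume "x \<in> {0..<n}"
    then have "1 \<le> ecc {0..<n} edges x"
      and "real (ecc {0..<n} edges x) \<le> (if x = 0 then 2 else if k < x \<and> x \<le> 2 * k then 4 else 3)"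
      using ecc_pos ecc_le_height[of x] height_eq[of x] by (auto split: if_splits)
    then show "1 \<le> ecc {0..<n} edges x \<and> real (ecc {0..<n} edges x) * w x \<le> 1"
      unfolding w_def by (simp split: if_splits)
  qed
  have "(\<Sum>e\<in>edges. \<Sum>x\<in>e. w x) = (\<Sum>v\<in>{1..<n}. 5 / 6 - (if v \<in> {k<..2 * k} then 1 / 4 else 0))"
    unfolding sum_edge_weights using k_pos by (intro sum.cong) (auto simp: w_def up_def)
  also have "\<dots> = 5 / 6 * real (n - 1) - (\<Sum>v\<in>{1..<n}. if v \<in> {k<..2 * k} then 1 / 4 else 0)"
    by (simp add: sum_subtractf)
  also have "(\<Sum>v\<in>{1..<n}. if v \<in> {k<..2 * k} then 1 / 4 else 0) = (\<Sum>v\<in>{1..<n} \<inter> {k<..2 * k}. 1 / (4 :: real))"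
    by (rule sum.inter_restrict[symmetric]) simp
  also have "{1..<n} \<inter> {k<..2 * k} = {k<..2 * k}"
    using n_ge k_pos by auto
  finally have "(\<Sum>e\<in>edges. \<Sum>x\<in>e. w x) = 5 * (real n - 1) / 6 - real k / 4"
    using n_ge by (simp add: of_nat_diff)
  with ge show ?thesis by simp
qed

end

section \<open>Relabelling vertices\<close>

locale relabelling =
  fixes f :: "'b \<Rightarrow> 'a" and S :: "'b set" and Es :: "'b set set"
  assumes inj: "inj_on f S" and edges_within: "\<And>e. e \<in> Es \<Longrightarrow> e \<subseteq> S"
begin

definition image_edges :: "'a set set" where
  "image_edges = (\<lambda>e. f ` e) ` Es"

lemma edge_image: "{a, b} \<in> Es \<Longrightarrow> {f a, f b} \<in> image_edges"
proof -
  assume "{a, b} \<in> Es"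
  then have "f ` {a, b} \<in> (\<lambda>e. f ` e) ` Es" by (rule imageI)
  then show ?thesis unfolding image_edges_def by simp
qed

lemma image_edge_iff: "a \<in> S \<Longrightarrow> b \<in> S \<Longrightarrow> {f a, f b} \<in> image_edges \<longleftrightarrow> {a, b} \<in> Es"
proof
  assume ab: "a \<in> S" "b \<in> S" and "{f a, f b} \<in> image_edges"
  then obtain e where e: "e \<in> Es" "{f a, f b} = f ` e"
    unfolding image_edges_def by blast
  then have "f ` {a, b} = f ` e" by simp
  moreover have "{a, b} \<subseteq> S" using ab by simp
  ultimately have "{a, b} = e"
    using inj_on_image_eq_iff[OF inj _ edges_within[OF e(1)]] by blast
  with e(1) show "{a, b} \<in> Es" by simp
next
  assume "{a, b} \<in> Es"
  then show "{f a, f b} \<in> image_edges" by (rule edge_image)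
qed

lemma walk_image: "is_walk S Es xs \<Longrightarrow> is_walk (f ` S) image_edges (map f xs)"
  by (rule is_walk_map[OF _ edge_image])

lemma walk_preimage:
  assumes w: "is_walk (f ` S) image_edges ys"
  shows "\<exists>xs. ys = map f xs \<and> is_walk S Es xs"
proof (intro exI conjI)
  let ?g = "inv_into S f"
  have sys: "set ys \<subseteq> f ` S" using is_walk_set[OF w] .
  then show ys: "ys = map f (map ?g ys)"
    by (induction ys) (auto simp: f_inv_into_f)
  show "is_walk S Es (map ?g ys)"
    unfolding is_walk_def
  proof (intro conjI allI impI)
    show "map ?g ys \<noteq> []" using is_walk_nonempty[OF w] by simp
    show "set (map ?g ys) \<subseteq> S" using sys by (auto simp: inv_into_into)
    fix i assume i: "i < length (map ?g ys) - 1"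
    then have "{ys ! i, ys ! Suc i} \<in> image_edges" "ys ! i \<in> f ` S" "ys ! Suc i \<in> f ` S"
      using is_walk_edge[OF w] sys by auto
    then show "{map ?g ys ! i, map ?g ys ! Suc i} \<in> Es"
      using image_edge_iff[of "?g (ys ! i)" "?g (ys ! Suc i)"] i
      by (simp add: f_inv_into_f inv_into_into)
  qed
qed

lemma simple_graph_image: "simple_graph S Es \<Longrightarrow> simple_graph (f ` S) image_edges"
  using edges_within unfolding simple_graph_def image_edges_def
  by (auto simp: card_image[OF inj_on_subset[OF inj]])

lemma connected_graph_image: "connected_graph S Es \<Longrightarrow> connected_graph (f ` S) image_edges"
  unfolding connected_graph_def
proof (intro ballI)
  fix u v assume conn: "\<forall>a\<in>S. \<forall>b\<in>S. \<exists>xs. is_walk S Es xs \<and> hd xs = a \<and> last xs = b"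
    and "u \<in> f ` S" "v \<in> f ` S"
  then obtain a b where "a \<in> S" "b \<in> S" "u = f a" "v = f b" by blast
  moreover obtain xs where xs: "is_walk S Es xs" "hd xs = a" "last xs = b"
    using conn \<open>a \<in> S\<close> \<open>b \<in> S\<close> by blast
  ultimately show "\<exists>ys. is_walk (f ` S) image_edges ys \<and> hd ys = u \<and> last ys = v"
    using walk_image[OF xs(1)] is_walk_nonempty[OF xs(1)]
    by (intro exI[of _ "map f xs"]) (simp add: hd_map last_map)
qed

lemma acyclic_image: "\<not> has_cycle S Es \<Longrightarrow> \<not> has_cycle (f ` S) image_edges"
proof
  assume nc: "\<not> has_cycle S Es" and "has_cycle (f ` S) image_edges"
  then obtain ys where ys: "is_walk (f ` S) image_edges ys" "distinct ys" "3 \<le> length ys"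
      "{last ys, hd ys} \<in> image_edges"
    unfolding has_cycle_def by blast
  obtain xs where xs: "ys = map f xs" "is_walk S Es xs"
    using walk_preimage[OF ys(1)] by blast
  have "xs \<noteq> []" "last xs \<in> S" "hd xs \<in> S"
    using is_walk_nonempty[OF xs(2)] is_walk_set[OF xs(2)] by auto
  then have "{last xs, hd xs} \<in> Es"
    using ys(4) xs(1) image_edge_iff[of "last xs" "hd xs"] by (simp add: hd_map last_map)
  then have "has_cycle S Es"
    using xs ys(2,3) unfolding has_cycle_def by (auto simp: distinct_map)
  with nc show False by simp
qed

lemma tree_image: "is_tree S Es \<Longrightarrow> is_tree (f ` S) image_edges"
  unfolding is_tree_def using simple_graph_image connected_graph_image acyclic_image by blast

lemma gdist_image:
  assumes u: "u \<in> S" and v: "v \<in> S"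
  shows "gdist (f ` S) image_edges (f u) (f v) = gdist S Es u v"
proof -
  have "(\<exists>ys. is_walk (f ` S) image_edges ys \<and> hd ys = f u \<and> last ys = f v \<and> length ys = Suc l) \<longleftrightarrow>
        (\<exists>xs. is_walk S Es xs \<and> hd xs = u \<and> last xs = v \<and> length xs = Suc l)" for l
  proof
    assume "\<exists>ys. is_walk (f ` S) image_edges ys \<and> hd ys = f u \<and> last ys = f v \<and> length ys = Suc l"
    then obtain ys where ys: "is_walk (f ` S) image_edges ys" "hd ys = f u" "last ys = f v" "length ys = Suc l"
      by blast
    obtain xs where xs: "ys = map f xs" "is_walk S Es xs"
      using walk_preimage[OF ys(1)] by blast
    have "xs \<noteq> []" "last xs \<in> S" "hd xs \<in> S"
      using is_walk_nonempty[OF xs(2)] is_walk_set[OF xs(2)] by auto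
    then have "hd xs = u" "last xs = v"
      using ys(2,3) xs(1) u v inj_onD[OF inj] by (auto simp: hd_map last_map)
    then show "\<exists>xs. is_walk S Es xs \<and> hd xs = u \<and> last xs = v \<and> length xs = Suc l"
      using xs ys(4) by auto
  next
    assume "\<exists>xs. is_walk S Es xs \<and> hd xs = u \<and> last xs = v \<and> length xs = Suc l"
    then obtain xs where xs: "is_walk S Es xs" "hd xs = u" "last xs = v" "length xs = Suc l"
      by blast
    then show "\<exists>ys. is_walk (f ` S) image_edges ys \<and> hd ys = f u \<and> last ys = f v \<and> length ys = Suc l"
      using walk_image[OF xs(1)] is_walk_nonempty[OF xs(1)]
      by (intro exI[of _ "map f xs"]) (simp add: hd_map last_map)
  qed
  then show ?thesis unfolding gdist_def by simp
qed

lemma ecc_image: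
  assumes "x \<in> S"
  shows "ecc (f ` S) image_edges (f x) = ecc S Es x"
proof -
  have "(\<lambda>y. gdist (f ` S) image_edges (f x) y) ` f ` S = (\<lambda>y. gdist S Es x y) ` S"
    unfolding image_image using gdist_image[OF assms] by (intro image_cong) auto
  then show ?thesis
    unfolding ecc_def by simp
qed

lemma degree_image:
  assumes x: "x \<in> S"
  shows "degree image_edges (f x) = degree Es x"
proof -
  have "{e' \<in> image_edges. f x \<in> e'} = (\<lambda>e. f ` e) ` {e \<in> Es. x \<in> e}"
    using inj x edges_within unfolding image_edges_def by (auto dest: inj_onD)
  moreover have "inj_on (\<lambda>e. f ` e) {e \<in> Es. x \<in> e}"
    using inj_on_image_eq_iff[OF inj] edges_within by (intro inj_onI) blast
  ultimately show ?thesis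
    unfolding degree_def by (simp add: card_image)
qed

lemma xi_ee_image: "xi_ee (f ` S) image_edges = xi_ee S Es"
  unfolding xi_ee_def by (simp add: sum.reindex[OF inj] degree_image ecc_image)

lemma dominating_set_image:
  assumes D: "D \<subseteq> S"
  shows "dominating_set (f ` S) image_edges (f ` D) \<longleftrightarrow> dominating_set S Es D"
proof -
  have mem: "f v \<in> f ` D \<longleftrightarrow> v \<in> D" if "v \<in> S" for v
    using inj_on_image_mem_iff[OF inj that D] .
  have adj: "(\<exists>u\<in>f ` D. {u, f v} \<in> image_edges) \<longleftrightarrow> (\<exists>u\<in>D. {u, v} \<in> Es)" if "v \<in> S" for v
  proof -
    have "(\<exists>u\<in>f ` D. {u, f v} \<in> image_edges) \<longleftrightarrow> (\<exists>u\<in>D. {f u, f v} \<in> image_edges)"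
      by auto
    also have "\<dots> \<longleftrightarrow> (\<exists>u\<in>D. {u, v} \<in> Es)"
      using image_edge_iff[OF _ that] D by auto
    finally show ?thesis .
  qed
  have "(\<forall>v'\<in>f ` S. P v') \<longleftrightarrow> (\<forall>v\<in>S. P (f v))" for P
    by blast
  then show ?thesis
    unfolding dominating_set_def using D mem adj by (simp add: image_mono)
qed

lemma domination_number_image: "domination_number (f ` S) image_edges = domination_number S Es"
proof -
  have "{D'. dominating_set (f ` S) image_edges D'} = image f ` {D. dominating_set S Es D}"
  proof (intro equalityI subsetI)
    fix D' assume D': "D' \<in> {D'. dominating_set (f ` S) image_edges D'}"
    then have "D' = f ` (S \<inter> f -` D')"
      unfolding dominating_set_def by blast
    with D' show "D' \<in> image f ` {D. dominating_set S Es D}"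
      using dominating_set_image[of "S \<inter> f -` D'"] by auto
  next
    fix D' assume "D' \<in> image f ` {D. dominating_set S Es D}"
    then obtain D where "dominating_set S Es D" "D' = f ` D" by blast
    then show "D' \<in> {D'. dominating_set (f ` S) image_edges D'}"
      using dominating_set_image[of D] unfolding dominating_set_def by simp
  qed
  then have "card ` {D'. dominating_set (f ` S) image_edges D'} = (\<lambda>D. card (f ` D)) ` {D. dominating_set S Es D}"
    by (simp add: image_image)
  also have "\<dots> = card ` {D. dominating_set S Es D}"
    using inj_on_subset[OF inj] unfolding dominating_set_def by (intro image_cong) (auto intro: card_image)
  finally show ?thesis
    unfolding domination_number_def by simp
qed

end

section \<open>Extremal trees\<close>

lemma exists_tree_with_large_xi_ee:
  assumes "finite V" "1 \<le> k" "2 * k + 2 \<le> card V"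
  shows "\<exists>E. is_tree V E \<and> domination_number V E = k + 1
    \<and> 5 * (real (card V) - 1) / 6 - real k / 4 \<le> xi_ee V E"
proof -
  interpret spider k "card V"
    using assms(2,3) by unfold_locales
  obtain f where f: "bij_betw f {0..<card V} V"
    using ex_bij_betw_nat_finite[OF assms(1)] by blast
  interpret relabelling f "{0..<card V}" edges
    using f simple unfolding bij_betw_def simple_graph_def by unfold_locales auto
  have "f ` {0..<card V} = V"
    using f by (simp add: bij_betw_def)
  then show ?thesis
    using tree_image[OF tree] domination_number_image domination_number xi_ee_image xi_ee_ge by metis
qed

lemma exists_tree_with_larger_xi_ee:
  assumes tr: "is_tree V E" and gap: "domination_number V E < matching_number E"
  shows "\<exists>E'. is_tree V E' \<and> domination_number V E' = domination_number V E \<and> xi_ee V E < xi_ee V E'"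
proof -
  define \<gamma> where "\<gamma> = domination_number V E"
  have sg: "simple_graph V E" using tr by (rule tree_simple_graph)
  have "1 \<le> \<gamma>"
    using domination_number_pos[OF tree_finite[OF tr]] tr unfolding \<gamma>_def is_tree_def by blast
  moreover have "\<gamma> \<noteq> 1"
    using tree_matching_number_le_one[OF tr] gap unfolding \<gamma>_def by auto
  moreover have "2 * matching_number E \<le> card V"
    using matching_number_le_half[OF sg] .
  ultimately obtain E' where E': "is_tree V E'" "domination_number V E' = \<gamma>"
      "5 * (real (card V) - 1) / 6 - real (\<gamma> - 1) / 4 \<le> xi_ee V E'"
    using exists_tree_with_large_xi_ee[OF tree_finite[OF tr], of "\<gamma> - 1"] gap
    unfolding \<gamma>_def by fastforce
  have "xi_ee V E \<le> 5 * (real (card V) - 1) / 6 - (real (matching_number E) - 1) / 4"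
    using tree_xi_ee_le_matching_number[OF tr] gap \<open>1 \<le> \<gamma>\<close> \<open>\<gamma> \<noteq> 1\<close> unfolding \<gamma>_def by simp
  also have "\<dots> < 5 * (real (card V) - 1) / 6 - real (\<gamma> - 1) / 4"
    using gap \<open>1 \<le> \<gamma>\<close> unfolding \<gamma>_def by (simp add: of_nat_diff)
  also have "\<dots> \<le> xi_ee V E'"
    by (rule E'(3))
  finally show ?thesis
    using E'(1,2) unfolding \<gamma>_def by blast
qed

theorem lemma4p4:
  fixes V :: "'a set" and E :: "'a set set" and n \<gamma> :: nat
  assumes "n \<ge> 2"
    and "is_tree V E" and "card V = n" and "domination_number V E = \<gamma>"
    and "\<forall>(V' :: 'a set) (E' :: 'a set set). is_tree V' E' \<and> card V' = n \<and> domination_number V' E' = \<gamma>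
                 \<longrightarrow> xi_ee V' E' \<le> xi_ee V E"
  shows "domination_number V E = \<gamma> \<and> matching_number E = \<gamma>"
proof -
  note tr = assms(2) and extremal = assms(5)
  have "\<gamma> \<le> matching_number E"
    using domination_number_le_matching_number[OF tree_simple_graph[OF tr] tree_has_neighbour[OF tr]]
      assms(1,3,4) by simp
  moreover have "\<not> \<gamma> < matching_number E"
    using exists_tree_with_larger_xi_ee[OF tr] extremal assms(3,4) by (metis not_le)
  ultimately show ?thesis
    using assms(4) by simp
qed

end
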